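(* Let $\mathcal{T}$ obey the LC-PF model and covariance assumption of the context. 1. If node $b$ is the parent of nodes $a$ and $c$, then $\phi_{ab}=\sum_{d\in\mathcal{D}^a}\big(r_{ab}^2\Omega_p(d,d)+x_{ab}^2\Omega_q(d,d)+2r_{ab}x_{ab}\Omega_{pq}(d,d)\big)$ and $\phi_{ac}=\sum_{d\in\mathcal{D}^a}\big(r_{ab}^2\Omega_p(d,d)+x_{ab}^2\Omega_q(d,d)+2r_{ab}x_{ab}\Omega_{pq}(d,d)\big)+\sum_{d\in\mathcal{D}^c}\big(r_{bc}^2\Omega_p(d,d)+x_{bc}^2\Omega_q(d,d)+2r_{bc}x_{bc}\Omega_{pq}(d,d)\big)$. 2. If node $g$ is the parent of node $b$, and $b$ is the parent of nodes $a$ and $c$, then $\phi_{ag}-\phi_{cg}=\sum_{d\in\mathcal{D}^a}\big[\Omega_p(d,d)(r_{ab}^2+2r_{ab}r_{bg})+\Omega_q(d,d)(x_{ab}^2+2x_{ab}x_{bg})+2\Omega_{pq}(d,d)(r_{ab}x_{ab}+r_{bg}x_{ab}+r_{ab}x_{bg})\big]-\sum_{d\in\mathcal{D}^c}\big[\Omega_p(d,d)(r_{cb}^2+2r_{cb}r_{bg})+\Omega_q(d,d)(x_{cb}^2+2x_{cb}x_{bg})+2\Omega_{pq}(d,d)(r_{cb}x_{cb}+r_{bg}x_{cb}+r_{cb}x_{bg})\big]$, $\phi_{ag}=\sum_{d\in\mathcal{D}^a}\big[\Omega_p(d,d)(r_{ab}+r_{bg})^2+2\Omega_{pq}(d,d)(r_{ab}+r_{bg})(x_{ab}+x_{bg})+\Omega_q(d,d)(x_{ab}+x_{bg})^2\big]+\sum_{d\in\mathcal{D}^b\setminus\mathcal{D}^a}\big[\Omega_p(d,d)r_{bg}^2+\Omega_q(d,d)x_{bg}^2+2\Omega_{pq}(d,d)r_{bg}x_{bg}\big]$,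 $\phi^\theta_{ag}=\sum_{d\in\mathcal{D}^a}\big[\Omega_p(d,d)(x_{ab}+x_{bg})^2-2\Omega_{pq}(d,d)(r_{ab}+r_{bg})(x_{ab}+x_{bg})+\Omega_q(d,d)(r_{ab}+r_{bg})^2\big]+\sum_{d\in\mathcal{D}^b\setminus\mathcal{D}^a}\big[\Omega_p(d,d)x_{bg}^2+\Omega_q(d,d)r_{bg}^2-2\Omega_{pq}(d,d)r_{bg}x_{bg}\big]$, $\phi^{v\theta}_{ag}=\sum_{d\in\mathcal{D}^a}\big[(\Omega_p(d,d)-\Omega_q(d,d))(r_{ab}+r_{bg})(x_{ab}+x_{bg})+\Omega_{pq}(d,d)(x_{ab}+x_{bg})^2-\Omega_{pq}(d,d)(r_{ab}+r_{bg})^2\big]+\sum_{d\in\mathcal{D}^b\setminus\mathcal{D}^a}\big[(\Omega_p(d,d)-\Omega_q(d,d))r_{bg}x_{bg}+\Omega_{pq}(d,d)(x_{bg}^2-r_{bg}^2)\big]$.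
   Context: $\mathcal{T}=(\mathcal{V},\mathcal{E})$ is a tree with a distinguished root (substation) of degree one. Each edge $(ab)$ has resistance $r_{ab}=r_{ba}>0$ and reactance $x_{ab}=x_{ba}>0$. For a node $a$, $\mathcal{P}^a$ is the set of edges on the path from $a$ to the root. The descendant set $\mathcal{D}^a$ is the set of nodes $c$ with $\mathcal{P}^a\subseteq\mathcal{P}^c$, including $a$. If $a\in\mathcal{D}^b$ and $(ab)\in\mathcal{E}$, then $b$ is the parent of $a$. Let $H_{1/r},H_{1/x}$ be the weighted Laplacians of $\mathcal{T}$ with edge weights $1/r_{ab}$, $1/x_{ab}$, with the root row and column removed. Non-root nodes have random injections $p_a,q_a$. The LC-PF model gives the voltage magnitude deviations $v=H_{1/r}^{-1}p+H_{1/x}^{-1}q$ and phases $\theta=H_{1/x}^{-1}p-H_{1/r}^{-1}q$ at non-root nodes; the root magnitude and phase are constants. Covariance assumption: $\Omega_p,\Omega_q$ are the covariances of $p,q$, and $\Omega_{pq}=\mathbb{E}[(p-\mathbb{E}p)(q-\mathbb{E}q)^T]=\Omega_{qp}^T$. For distinct non-root $a,b$, $\Omega_p(a,b)=\Omega_q(a,b)=\Omega_{qp}(a,b)=0$, and $\Omega_{qp}(a,a)\ge0$. Writing $\tilde v_a=v_a-\mathbb{E}v_a$ and $\tilde\theta_a=\theta_a-\mathbb{E}\theta_a$, define: - $\phi_{ab}=\mathbb{E}[(\tilde v_a-\tilde v_b)^2]$, - $\phi^\theta_{ab}=\mathbb{E}[(\tilde\theta_a-\tilde\theta_b)^2]$,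 - $\phi^{v\theta}_{ab}=\mathbb{E}[(\tilde v_a-\tilde v_b)(\tilde\theta_a-\tilde\theta_b)]$. *)

theory Defs
  imports "HOL-Probability.Probability"
begin

definition simple_path :: "('a \<times> 'a) set \<Rightarrow> 'a \<Rightarrow> 'a \<Rightarrow> 'a list \<Rightarrow> bool" where
  "simple_path E x y xs \<longleftrightarrow> xs \<noteq> [] \<and> hd xs = x \<and> last xs = y \<and> distinct xs \<and>
     (\<forall>i. Suc i < length xs \<longrightarrow> (xs ! i, xs ! Suc i) \<in> E)"

definition is_tree :: "'a set \<Rightarrow> ('a \<times> 'a) set \<Rightarrow> bool" where
  "is_tree V E \<longleftrightarrow> finite V \<and> E \<subseteq> V \<times> V \<and> sym E \<and> irrefl E \<and>
     (\<forall>x\<in>V. \<forall>y\<in>V. \<exists>!xs. simple_path E x y xs)"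

definition path_edges :: "('a \<times> 'a) set \<Rightarrow> 'a \<Rightarrow> 'a \<Rightarrow> 'a set set" where
  "path_edges E rt a =
     (let xs = (THE xs. simple_path E a rt xs)
      in {{xs ! i, xs ! Suc i} | i. Suc i < length xs})"

text \<open>D^a: descendants of a (including a).\<close>
definition desc :: "'a set \<Rightarrow> ('a \<times> 'a) set \<Rightarrow> 'a \<Rightarrow> 'a \<Rightarrow> 'a set" where
  "desc V E rt a = {c \<in> V. path_edges E rt a \<subseteq> path_edges E rt c}"

definition is_parent :: "'a set \<Rightarrow> ('a \<times> 'a) set \<Rightarrow> 'a \<Rightarrow> 'a \<Rightarrow> 'a \<Rightarrow> bool" where
  "is_parent V E rt b a \<longleftrightarrow> a \<in> desc V E rt b \<and> (a, b) \<in> E"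

definition lap :: "'a set \<Rightarrow> ('a \<times> 'a) set \<Rightarrow> ('a \<Rightarrow> 'a \<Rightarrow> real) \<Rightarrow> 'a \<Rightarrow> 'a \<Rightarrow> real" where
  "lap V E w a c =
     (if a = c then (\<Sum>b\<in>{b\<in>V. (a, b) \<in> E}. w a b)
      else if (a, c) \<in> E then - w a c else 0)"

definition lap_inv :: "'a set \<Rightarrow> ('a \<times> 'a) set \<Rightarrow> 'a \<Rightarrow> ('a \<Rightarrow> 'a \<Rightarrow> real) \<Rightarrow> 'a \<Rightarrow> 'a \<Rightarrow> real" where
  "lap_inv V E rt w =
     (THE G. (\<forall>a\<in>V - {rt}. \<forall>b\<in>V - {rt}.
                (\<Sum>c\<in>V - {rt}. lap V E w a c * G c b) = (if a = b then 1 else 0))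
           \<and> (\<forall>a b. a \<notin> V - {rt} \<or> b \<notin> V - {rt} \<longrightarrow> G a b = 0))"

definition vmag :: "'a set \<Rightarrow> ('a \<times> 'a) set \<Rightarrow> 'a \<Rightarrow> ('a \<Rightarrow> 'a \<Rightarrow> real) \<Rightarrow> ('a \<Rightarrow> 'a \<Rightarrow> real)
     \<Rightarrow> real \<Rightarrow> ('a \<Rightarrow> 'w \<Rightarrow> real) \<Rightarrow> ('a \<Rightarrow> 'w \<Rightarrow> real) \<Rightarrow> 'a \<Rightarrow> 'w \<Rightarrow> real" where
  "vmag V E rt r x v0 p q a \<omega> =
     (if a = rt then v0 else
       (\<Sum>b\<in>V - {rt}. lap_inv V E rt (\<lambda>u v. 1 / r u v) a b * p b \<omega>)
     + (\<Sum>b\<in>V - {rt}. lap_inv V E rt (\<lambda>u v. 1 / x u v) a b * q b \<omega>))"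

definition vphase :: "'a set \<Rightarrow> ('a \<times> 'a) set \<Rightarrow> 'a \<Rightarrow> ('a \<Rightarrow> 'a \<Rightarrow> real) \<Rightarrow> ('a \<Rightarrow> 'a \<Rightarrow> real)
     \<Rightarrow> real \<Rightarrow> ('a \<Rightarrow> 'w \<Rightarrow> real) \<Rightarrow> ('a \<Rightarrow> 'w \<Rightarrow> real) \<Rightarrow> 'a \<Rightarrow> 'w \<Rightarrow> real" where
  "vphase V E rt r x th0 p q a \<omega> =
     (if a = rt then th0 else
       (\<Sum>b\<in>V - {rt}. lap_inv V E rt (\<lambda>u v. 1 / x u v) a b * p b \<omega>)
     - (\<Sum>b\<in>V - {rt}. lap_inv V E rt (\<lambda>u v. 1 / r u v) a b * q b \<omega>))"

definition cov :: "'w measure \<Rightarrow> ('w \<Rightarrow> real) \<Rightarrow> ('w \<Rightarrow> real) \<Rightarrow> real" where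
  "cov M X Y = (\<integral>\<omega>. (X \<omega> - (\<integral>\<eta>. X \<eta> \<partial>M)) * (Y \<omega> - (\<integral>\<eta>. Y \<eta> \<partial>M)) \<partial>M)"

text \<open>E[(~X_a - ~X_b)(~Y_a - ~Y_b)]; phi = phi2 with X = Y = v, etc.\<close>
definition phi2 :: "'w measure \<Rightarrow> ('a \<Rightarrow> 'w \<Rightarrow> real) \<Rightarrow> ('a \<Rightarrow> 'w \<Rightarrow> real) \<Rightarrow> 'a \<Rightarrow> 'a \<Rightarrow> real" where
  "phi2 M X Y a b =
     (\<integral>\<omega>. ((X a \<omega> - (\<integral>\<eta>. X a \<eta> \<partial>M)) - (X b \<omega> - (\<integral>\<eta>. X b \<eta> \<partial>M)))
          * ((Y a \<omega> - (\<integral>\<eta>. Y a \<eta> \<partial>M)) - (Y b \<omega> - (\<integral>\<eta>. Y b \<eta> \<partial>M))) \<partial>M)"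

end

theory Submission
  imports Defs
begin

(*
  For edge weights 1/\<rho> the reduced Laplacian of the tree is inverted by the Green's function
  green \<rho> a d, the total weight \<rho> of the edges shared by the root paths of a and d.  Indeed,
  in row a the parent term contributes 1 if d is a descendant of a, and each child of a
  contributes -1 if d is a descendant of that child; exactly one child qualifies when d is a
  proper descendant of a, none otherwise.  Hence v and \<theta> are affine in the injections with
  coefficients green r and green x, and green \<rho> a d - green \<rho> b d is piecewise constant on
  descendant sets (\<rho> a b on desc a when b is the parent of a, 0 elsewhere).  As injections at
  distinct nodes are uncorrelated, each \<phi> is a sum over nodes d of a quadratic form in these
  two coefficient differences, weighted by \<Omega>p(d,d), \<Omega>q(d,d) and \<Omega>pq(d,d).
*)

section \<open>Centred square-integrable random variables\<close>

definition square_integrable :: "'w measure \<Rightarrow> ('w \<Rightarrow> real) \<Rightarrow> bool" where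
  "square_integrable M f \<longleftrightarrow> f \<in> borel_measurable M \<and> integrable M (\<lambda>\<omega>. (f \<omega>)\<^sup>2)"

definition centered :: "'w measure \<Rightarrow> ('w \<Rightarrow> real) \<Rightarrow> 'w \<Rightarrow> real" where
  "centered M f \<omega> = f \<omega> - (\<integral>\<eta>. f \<eta> \<partial>M)"

lemma cov_centered: "cov M X Y = (\<integral>\<omega>. centered M X \<omega> * centered M Y \<omega> \<partial>M)"
  unfolding cov_def centered_def ..

lemma cov_commute: "cov M X Y = cov M Y X"
  unfolding cov_def by (simp add: mult.commute)

lemma phi2_centered:
  "phi2 M X Y a b = (\<integral>\<omega>. (centered M (X a) \<omega> - centered M (X b) \<omega>)
                         * (centered M (Y a) \<omega> - centered M (Y b) \<omega>) \<partial>M)"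
  unfolding phi2_def centered_def ..

lemma integrable_mult_square_integrable:
  assumes "square_integrable M f" "square_integrable M g"
  shows "integrable M (\<lambda>\<omega>. f \<omega> * g \<omega>)"
proof (rule Bochner_Integration.integrable_bound)
  show "integrable M (\<lambda>\<omega>. (f \<omega>)\<^sup>2 + (g \<omega>)\<^sup>2)"
    using assms unfolding square_integrable_def by simp
  show "(\<lambda>\<omega>. f \<omega> * g \<omega>) \<in> borel_measurable M"
    using assms unfolding square_integrable_def by (intro borel_measurable_times) simp_all
  have "\<bar>u * w\<bar> \<le> u\<^sup>2 + w\<^sup>2" for u w :: real
    using sum_squares_bound[of "\<bar>u\<bar>" "\<bar>w\<bar>"] abs_ge_zero[of "u * w"]
    by (simp only: abs_mult power2_abs mult.assoc)
  then show "AE \<omega> in M. norm (f \<omega> * g \<omega>) \<le> norm ((f \<omega>)\<^sup>2 + (g \<omega>)\<^sup>2)"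
    by simp
qed

context finite_measure
begin

lemma integrable_square_integrable: "square_integrable M f \<Longrightarrow> integrable M f"
  unfolding square_integrable_def by (blast intro: square_integrable_imp_integrable)

lemma square_integrable_centered:
  assumes "square_integrable M f"
  shows "square_integrable M (centered M f)"
proof -
  define c where "c = (\<integral>\<eta>. f \<eta> \<partial>M)"
  have "integrable M (\<lambda>\<omega>. (f \<omega>)\<^sup>2 - 2 * c * f \<omega> + c\<^sup>2)"
    using assms integrable_square_integrable[OF assms] unfolding square_integrable_def by simp
  moreover have "(\<lambda>\<omega>. (f \<omega>)\<^sup>2 - 2 * c * f \<omega> + c\<^sup>2) = (\<lambda>\<omega>. (centered M f \<omega>)\<^sup>2)"
    unfolding centered_def c_def by (simp add: fun_eq_iff power2_eq_square algebra_simps)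
  ultimately show ?thesis
    using assms unfolding square_integrable_def centered_def by (auto intro: borel_measurable_diff)
qed

end

context prob_space
begin

lemma centered_affine_combination:
  assumes "finite S" and "\<And>d. d \<in> S \<Longrightarrow> integrable M (p d) \<and> integrable M (q d)"
  shows "centered M (\<lambda>\<omega>. c + (\<Sum>d\<in>S. \<alpha> d * p d \<omega> + \<beta> d * q d \<omega>)) \<omega>
       = (\<Sum>d\<in>S. \<alpha> d * centered M (p d) \<omega> + \<beta> d * centered M (q d) \<omega>)"
proof -
  have "(\<integral>\<eta>. c + (\<Sum>d\<in>S. \<alpha> d * p d \<eta> + \<beta> d * q d \<eta>) \<partial>M)
      = c + (\<Sum>d\<in>S. \<alpha> d * (\<integral>\<eta>. p d \<eta> \<partial>M) + \<beta> d * (\<integral>\<eta>. q d \<eta> \<partial>M))"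
    using assms by (simp add: prob_space)
  then show ?thesis
    unfolding centered_def by (simp add: sum_subtractf[symmetric] algebra_simps)
qed

lemma integral_centered_combinations_product:
  assumes "finite S"
    and sq: "\<And>d. d \<in> S \<Longrightarrow> square_integrable M (p d) \<and> square_integrable M (q d)"
    and uncorr: "\<forall>d\<in>S. \<forall>e\<in>S. d \<noteq> e \<longrightarrow>
               cov M (p d) (p e) = 0 \<and> cov M (q d) (q e) = 0 \<and> cov M (q d) (p e) = 0"
  shows "(\<integral>\<omega>. (\<Sum>d\<in>S. \<alpha> d * centered M (p d) \<omega> + \<beta> d * centered M (q d) \<omega>)
             * (\<Sum>d\<in>S. \<gamma> d * centered M (p d) \<omega> + \<delta> d * centered M (q d) \<omega>) \<partial>M)
       = (\<Sum>d\<in>S. \<alpha> d * \<gamma> d * cov M (p d) (p d) + \<beta> d * \<delta> d * cov M (q d) (q d)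
             + (\<alpha> d * \<delta> d + \<beta> d * \<gamma> d) * cov M (p d) (q d))"
proof -
  define P where "P d = centered M (p d)" for d
  define Q where "Q d = centered M (q d)" for d
  define C where "C d e = \<alpha> d * \<gamma> e * cov M (p d) (p e) + \<alpha> d * \<delta> e * cov M (p d) (q e)
    + \<beta> d * \<gamma> e * cov M (q d) (p e) + \<beta> d * \<delta> e * cov M (q d) (q e)" for d e
  have PQ: "square_integrable M (P d)" "square_integrable M (Q d)" if "d \<in> S" for d
    using sq[OF that] square_integrable_centered unfolding P_def Q_def by auto
  have "(\<integral>\<omega>. (\<Sum>d\<in>S. \<alpha> d * P d \<omega> + \<beta> d * Q d \<omega>) * (\<Sum>e\<in>S. \<gamma> e * P e \<omega> + \<delta> e * Q e \<omega>) \<partial>M)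
      = (\<integral>\<omega>. (\<Sum>d\<in>S. \<Sum>e\<in>S. \<alpha> d * \<gamma> e * (P d \<omega> * P e \<omega>) + \<alpha> d * \<delta> e * (P d \<omega> * Q e \<omega>)
            + \<beta> d * \<gamma> e * (Q d \<omega> * P e \<omega>) + \<beta> d * \<delta> e * (Q d \<omega> * Q e \<omega>)) \<partial>M)"
    unfolding sum_product
    by (intro Bochner_Integration.integral_cong sum.cong refl) (simp add: algebra_simps)
  also have "\<dots> = (\<Sum>d\<in>S. \<Sum>e\<in>S. C d e)"
    using PQ unfolding C_def cov_centered P_def[symmetric] Q_def[symmetric]
    by (simp add: integrable_mult_square_integrable)
  also have "\<dots> = (\<Sum>d\<in>S. C d d)"
  proof (rule sum.cong[OF refl])
    fix d assume d: "d \<in> S"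
    have "C d e = 0" if "e \<in> S - {d}" for e
      using uncorr d that cov_commute[of M "p d" "q e"] unfolding C_def by auto
    then show "(\<Sum>e\<in>S. C d e) = C d d"
      using \<open>finite S\<close> d by (simp add: sum.remove)
  qed
  finally have "(\<integral>\<omega>. (\<Sum>d\<in>S. \<alpha> d * P d \<omega> + \<beta> d * Q d \<omega>)
      * (\<Sum>e\<in>S. \<gamma> e * P e \<omega> + \<delta> e * Q e \<omega>) \<partial>M) = (\<Sum>d\<in>S. C d d)" .
  moreover have "C d d = \<alpha> d * \<gamma> d * cov M (p d) (p d) + \<beta> d * \<delta> d * cov M (q d) (q d)
      + (\<alpha> d * \<delta> d + \<beta> d * \<gamma> d) * cov M (p d) (q d)" for d
    using cov_commute[of M "q d" "p d"] unfolding C_def by (simp add: algebra_simps)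
  ultimately show ?thesis
    unfolding P_def Q_def by simp
qed

lemma phi2_affine_combinations:
  assumes "finite S"
    and sq: "\<And>d. d \<in> S \<Longrightarrow> square_integrable M (p d) \<and> square_integrable M (q d)"
    and uncorr: "\<forall>d\<in>S. \<forall>e\<in>S. d \<noteq> e \<longrightarrow>
               cov M (p d) (p e) = 0 \<and> cov M (q d) (q e) = 0 \<and> cov M (q d) (p e) = 0"
    and X: "\<And>u. u \<in> {a, b} \<Longrightarrow> X u = (\<lambda>\<omega>. cX u + (\<Sum>d\<in>S. \<alpha> u d * p d \<omega> + \<beta> u d * q d \<omega>))"
    and Y: "\<And>u. u \<in> {a, b} \<Longrightarrow> Y u = (\<lambda>\<omega>. cY u + (\<Sum>d\<in>S. \<gamma> u d * p d \<omega> + \<delta> u d * q d \<omega>))"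
  shows "phi2 M X Y a b = (\<Sum>d\<in>S. (\<alpha> a d - \<alpha> b d) * (\<gamma> a d - \<gamma> b d) * cov M (p d) (p d)
      + (\<beta> a d - \<beta> b d) * (\<delta> a d - \<delta> b d) * cov M (q d) (q d)
      + ((\<alpha> a d - \<alpha> b d) * (\<delta> a d - \<delta> b d) + (\<beta> a d - \<beta> b d) * (\<gamma> a d - \<gamma> b d))
        * cov M (p d) (q d))"
proof -
  have int: "integrable M (p d) \<and> integrable M (q d)" if "d \<in> S" for d
    using sq[OF that] integrable_square_integrable by blast
  note centered = centered_affine_combination[OF \<open>finite S\<close> int]
  have cX: "centered M (X u) \<omega> = (\<Sum>d\<in>S. \<alpha> u d * centered M (p d) \<omega> + \<beta> u d * centered M (q d) \<omega>)"
    if "u \<in> {a, b}" for u \<omega>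
    unfolding X[OF that] by (rule centered)
  have cY: "centered M (Y u) \<omega> = (\<Sum>d\<in>S. \<gamma> u d * centered M (p d) \<omega> + \<delta> u d * centered M (q d) \<omega>)"
    if "u \<in> {a, b}" for u \<omega>
    unfolding Y[OF that] by (rule centered)
  have diff_X: "centered M (X a) \<omega> - centered M (X b) \<omega>
      = (\<Sum>d\<in>S. (\<alpha> a d - \<alpha> b d) * centered M (p d) \<omega> + (\<beta> a d - \<beta> b d) * centered M (q d) \<omega>)"
    and diff_Y: "centered M (Y a) \<omega> - centered M (Y b) \<omega>
      = (\<Sum>d\<in>S. (\<gamma> a d - \<gamma> b d) * centered M (p d) \<omega> + (\<delta> a d - \<delta> b d) * centered M (q d) \<omega>)"
    for \<omega>
    by (simp_all add: cX cY sum_subtractf[symmetric] algebra_simps)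
  show ?thesis
    unfolding phi2_centered diff_X diff_Y
    by (rule integral_centered_combinations_product[OF \<open>finite S\<close> sq uncorr])
qed

end

section \<open>Rooted trees and the Green's function of the Laplacian\<close>

lemma lap_mult_eq_neighbour_sum:
  assumes "finite V" "a \<in> V" "(a, a) \<notin> E"
  shows "(\<Sum>c\<in>V. lap V E w a c * f c) = (\<Sum>c\<in>{c \<in> V. (a, c) \<in> E}. w a c * (f a - f c))"
proof -
  have "lap V E w a c * f c
      = (if c = a then (\<Sum>b\<in>{b \<in> V. (a, b) \<in> E}. w a b * f a) else 0)
        - (if (a, c) \<in> E then w a c * f c else 0)" for c
    using assms(3) unfolding lap_def by (auto simp: sum_distrib_right)
  then show ?thesis
    using assms(1,2) by (simp add: sum_subtractf sum.inter_filter right_diff_distrib)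
qed

lemma left_inverse_eq_right_inverse:
  assumes "finite S"
    and G: "\<And>a b. a \<in> S \<Longrightarrow> b \<in> S \<Longrightarrow> (\<Sum>c\<in>S. G a c * A c b) = (if a = b then 1 else 0)"
    and H: "\<And>a b. a \<in> S \<Longrightarrow> b \<in> S \<Longrightarrow> (\<Sum>c\<in>S. A a c * H c b) = (if a = b then 1 else 0)"
    and "a \<in> S" "b \<in> S"
  shows "G a b = (H a b :: 'r :: comm_ring_1)"
proof -
  have "G a b = (\<Sum>e\<in>S. if e = b then G a e else 0)"
    using assms(1,5) by simp
  also have "\<dots> = (\<Sum>e\<in>S. G a e * (\<Sum>c\<in>S. A e c * H c b))"
    using H[OF _ assms(5)] by (intro sum.cong refl) auto
  also have "\<dots> = (\<Sum>e\<in>S. \<Sum>c\<in>S. G a e * (A e c * H c b))"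
    by (simp only: sum_distrib_left)
  also have "\<dots> = (\<Sum>c\<in>S. \<Sum>e\<in>S. G a e * (A e c * H c b))"
    by (rule sum.swap)
  also have "\<dots> = (\<Sum>c\<in>S. (\<Sum>e\<in>S. G a e * A e c) * H c b)"
    by (simp only: sum_distrib_right mult.assoc)
  also have "\<dots> = (\<Sum>c\<in>S. if a = c then H c b else 0)"
    using G[OF assms(4)] by (intro sum.cong refl) auto
  also have "\<dots> = H a b"
    using assms(1,4) by simp
  finally show ?thesis .
qed

lemma simple_path_drop:
  assumes "simple_path E a y xs" "k < length xs"
  shows "simple_path E (xs ! k) y (drop k xs)"
  using assms unfolding simple_path_def
  by (auto simp: hd_drop_conv_nth last_drop nth_drop)

lemma simple_path_Cons:
  assumes "simple_path E b y xs" "(a, b) \<in> E" "a \<notin> set xs"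
  shows "simple_path E a y (a # xs)"
  unfolding simple_path_def
proof (intro conjI allI impI)
  show "a # xs \<noteq> []" "hd (a # xs) = a" by simp_all
  show "last (a # xs) = y" "distinct (a # xs)"
    using assms unfolding simple_path_def by auto
  fix i assume "Suc i < length (a # xs)"
  then show "((a # xs) ! i, (a # xs) ! Suc i) \<in> E"
    using assms unfolding simple_path_def by (cases i) (auto simp: hd_conv_nth)
qed

locale rooted_tree =
  fixes V :: "'a set" and E :: "('a \<times> 'a) set" and rt :: 'a
  assumes tree: "is_tree V E" and root_in_V: "rt \<in> V"
begin

lemma finite_V: "finite V"
  using tree unfolding is_tree_def by auto

lemma edge_in_V: "(a, b) \<in> E \<Longrightarrow> a \<in> V \<and> b \<in> V"
  using tree unfolding is_tree_def by auto

lemma edge_sym: "(a, b) \<in> E \<Longrightarrow> (b, a) \<in> E"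
  using tree unfolding is_tree_def sym_def by auto

lemma edge_irrefl: "(a, a) \<notin> E"
  using tree unfolding is_tree_def irrefl_def by auto

definition root_path :: "'a \<Rightarrow> 'a list" where
  "root_path a = (THE xs. simple_path E a rt xs)"

definition parent :: "'a \<Rightarrow> 'a" where
  "parent a = root_path a ! 1"

lemma ex1_simple_path_to_root: "a \<in> V \<Longrightarrow> \<exists>!xs. simple_path E a rt xs"
  using tree root_in_V unfolding is_tree_def by auto

lemma simple_path_root_path: "a \<in> V \<Longrightarrow> simple_path E a rt (root_path a)"
  unfolding root_path_def using ex1_simple_path_to_root by (rule theI')

lemma root_path_unique: "a \<in> V \<Longrightarrow> simple_path E a rt xs \<Longrightarrow> root_path a = xs"
  unfolding root_path_def using ex1_simple_path_to_root by (rule the1_equality)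

lemma simple_path_subset_V:
  assumes "simple_path E a y xs" "a \<in> V"
  shows "set xs \<subseteq> V"
proof
  fix u assume "u \<in> set xs"
  then obtain i where i: "i < length xs" "xs ! i = u" by (auto simp: in_set_conv_nth)
  show "u \<in> V"
  proof (cases i)
    case 0 then show ?thesis using i assms unfolding simple_path_def by (auto simp: hd_conv_nth)
  next
    case (Suc j)
    then have "(xs ! j, xs ! Suc j) \<in> E" using i assms unfolding simple_path_def by auto
    then show ?thesis using edge_in_V i Suc by auto
  qed
qed

lemma root_path_nth_0: "a \<in> V \<Longrightarrow> root_path a \<noteq> [] \<and> root_path a ! 0 = a"
  using simple_path_root_path[of a] unfolding simple_path_def by (metis hd_conv_nth)

lemma root_path_distinct: "a \<in> V \<Longrightarrow> distinct (root_path a)"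
  using simple_path_root_path unfolding simple_path_def by auto

lemma root_path_subset_V: "a \<in> V \<Longrightarrow> set (root_path a) \<subseteq> V"
  using simple_path_root_path simple_path_subset_V by blast

lemma mem_root_path: "a \<in> V \<Longrightarrow> a \<in> set (root_path a) \<and> rt \<in> set (root_path a)"
  using simple_path_root_path[of a] unfolding simple_path_def by (metis hd_in_set last_in_set)

lemma root_path_root: "root_path rt = [rt]"
  using root_path_unique[OF root_in_V, of "[rt]"] unfolding simple_path_def by auto

lemma root_path_drop:
  assumes "a \<in> V" "k < length (root_path a)"
  shows "root_path (root_path a ! k) = drop k (root_path a)"
  using assms root_path_subset_V root_path_unique simple_path_drop[OF simple_path_root_path]
  by (meson nth_mem subsetD)

lemma root_path_length:
  assumes "a \<in> V" "a \<noteq> rt"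
  shows "1 < length (root_path a)"
  using assms root_path_nth_0[OF assms(1)] mem_root_path[OF assms(1)]
  by (cases "root_path a"; cases "tl (root_path a)") auto

lemma root_path_Cons:
  assumes "a \<in> V" "a \<noteq> rt"
  shows "root_path a = a # root_path (parent a)"
  using root_path_drop[OF assms(1), of 1] root_path_length[OF assms] root_path_nth_0[OF assms(1)]
  unfolding parent_def by (cases "root_path a") auto

lemma parent_edge:
  assumes "a \<in> V" "a \<noteq> rt"
  shows "parent a \<in> V" "(a, parent a) \<in> E"
proof -
  have "1 < length (root_path a)" using root_path_length assms .
  then show "parent a \<in> V"
    using root_path_subset_V[OF assms(1)] nth_mem unfolding parent_def by blast
  show "(a, parent a) \<in> E"
    using \<open>1 < length (root_path a)\<close> simple_path_root_path[OF assms(1)] root_path_nth_0[OF assms(1)]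
    unfolding simple_path_def parent_def by (metis One_nat_def)
qed

lemma root_path_ancestor:
  assumes "d \<in> V" "a \<in> set (root_path d)"
  obtains k where "k < length (root_path d)" "root_path d ! k = a" "root_path a = drop k (root_path d)"
  using assms root_path_drop by (metis in_set_conv_nth)

lemma root_path_ancestor_subset:
  "d \<in> V \<Longrightarrow> a \<in> set (root_path d) \<Longrightarrow> set (root_path a) \<subseteq> set (root_path d)"
  by (metis root_path_ancestor set_drop_subset)

lemma length_root_path_less:
  assumes "d \<in> V" "a \<in> set (root_path d)" "a \<noteq> d"
  shows "length (root_path a) < length (root_path d)"
proof -
  obtain k where "k < length (root_path d)" "root_path d ! k = a" "root_path a = drop k (root_path d)"
    using root_path_ancestor[OF assms(1,2)] .
  moreover have "k \<noteq> 0" using calculation(2) assms(3) root_path_nth_0[OF assms(1)] by metis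
  ultimately show ?thesis by simp
qed

lemma mem_root_path_edge:
  assumes a: "a \<in> V" and b: "b \<in> set (root_path a)" and e: "(a, b) \<in> E"
  shows "a \<noteq> rt \<and> b = parent a"
proof -
  define xs where "xs = root_path a"
  obtain k where k: "k < length xs" "xs ! k = b"
    using b unfolding xs_def by (auto simp: in_set_conv_nth)
  have "k \<noteq> 0"
  proof
    assume "k = 0"
    then have "b = a" using k root_path_nth_0[OF a] unfolding xs_def by simp
    then show False using e edge_irrefl by simp
  qed
  then have "a \<notin> set (drop k xs)"
    using set_take_disj_set_drop_if_distinct[OF root_path_distinct[OF a], of 1 k] root_path_nth_0[OF a]
    unfolding xs_def by (cases "root_path a") auto
  then have "simple_path E a rt (a # drop k xs)"
    using simple_path_Cons simple_path_drop[OF simple_path_root_path[OF a]] k e unfolding xs_def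
    by metis
  then have "xs = a # drop k xs" using root_path_unique[OF a] unfolding xs_def by blast
  then have "length xs = Suc (length xs - k)" by (metis length_Cons length_drop)
  then have "k = 1" using k \<open>k \<noteq> 0\<close> by linarith
  moreover have "a \<noteq> rt" using b e edge_irrefl root_path_root by auto
  ultimately show ?thesis using k unfolding parent_def xs_def by simp
qed

lemma edge_parent_cases:
  assumes e: "(a, c) \<in> E"
  shows "(a \<noteq> rt \<and> c = parent a) \<or> (c \<noteq> rt \<and> a = parent c)"
proof -
  have a: "a \<in> V" and c: "c \<in> V" using edge_in_V e by auto
  consider "c \<in> set (root_path a)" | "a \<in> set (root_path c)"
    | "c \<notin> set (root_path a)" "a \<notin> set (root_path c)" by blast
  then show ?thesis
  proof cases
    case 3
    then have "simple_path E c rt (c # root_path a)"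
      using simple_path_Cons[OF simple_path_root_path[OF a] edge_sym[OF e]] root_path_nth_0[OF a]
      by (metis hd_conv_nth simple_path_def)
    then have "root_path c = c # root_path a" using root_path_unique[OF c] by blast
    then show ?thesis using 3 mem_root_path[OF a] by simp
  qed (use mem_root_path_edge a c e edge_sym in blast)+
qed

lemma desc_eq:
  assumes a: "a \<in> V"
  shows "desc V E rt a = {c \<in> V. a \<in> set (root_path c)}"
proof -
  have edges: "path_edges E rt u
      = {{root_path u ! i, root_path u ! Suc i} | i. Suc i < length (root_path u)}" for u
    unfolding path_edges_def root_path_def Let_def ..
  have "path_edges E rt a \<subseteq> path_edges E rt c \<longleftrightarrow> a \<in> set (root_path c)" if c: "c \<in> V" for c
  proof
    assume sub: "path_edges E rt a \<subseteq> path_edges E rt c"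
    show "a \<in> set (root_path c)"
    proof (cases "a = rt")
      case True then show ?thesis using mem_root_path[OF c] by simp
    next
      case False
      have "root_path (parent a) \<noteq> [] \<and> root_path (parent a) ! 0 = parent a"
        using root_path_nth_0 parent_edge[OF a False] by blast
      then have "{a, parent a} \<in> path_edges E rt a"
        unfolding edges root_path_Cons[OF a False] by (auto intro!: exI[of _ 0])
      then have "{a, parent a} \<in> path_edges E rt c" using sub by blast
      then obtain i where "{a, parent a} = {root_path c ! i, root_path c ! Suc i}"
        "Suc i < length (root_path c)"
        unfolding edges by blast
      then show ?thesis by (metis Suc_lessD doubleton_eq_iff nth_mem)
    qed
  next
    assume "a \<in> set (root_path c)"
    then obtain k where k: "k < length (root_path c)" "root_path a = drop k (root_path c)"
      using root_path_ancestor[OF c] by metis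
    show "path_edges E rt a \<subseteq> path_edges E rt c"
    proof
      fix e assume "e \<in> path_edges E rt a"
      then obtain i where "e = {root_path a ! i, root_path a ! Suc i}" "Suc i < length (root_path a)"
        unfolding edges by auto
      then have "e = {root_path c ! (k + i), root_path c ! Suc (k + i)}"
        "Suc (k + i) < length (root_path c)"
        using k by auto
      then show "e \<in> path_edges E rt c" unfolding edges by blast
    qed
  qed
  then show ?thesis unfolding desc_def by auto
qed

lemma is_parentD:
  assumes "is_parent V E rt b a"
  shows "a \<in> V" "b \<in> V" "a \<noteq> rt" "b = parent a"
proof -
  have e: "(a, b) \<in> E" and d: "a \<in> desc V E rt b" using assms unfolding is_parent_def by auto
  show "a \<in> V" "b \<in> V" using edge_in_V e by auto
  then have "b \<in> set (root_path a)" using d desc_eq by auto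
  then show "a \<noteq> rt" "b = parent a" using mem_root_path_edge \<open>a \<in> V\<close> e by auto
qed

lemma root_path_parent_inj:
  assumes d: "d \<in> V" and a: "a \<in> set (root_path d)" "a \<noteq> rt"
    and c: "c \<in> set (root_path d)" "c \<noteq> rt" and "parent a = parent c"
  shows "a = c"
proof -
  define xs where "xs = root_path d"
  obtain i where i: "i < length xs" "xs ! i = a" "root_path a = drop i xs"
    using root_path_ancestor[OF d a(1)] unfolding xs_def .
  obtain j where j: "j < length xs" "xs ! j = c" "root_path c = drop j xs"
    using root_path_ancestor[OF d c(1)] unfolding xs_def .
  have "a \<in> V" "c \<in> V" using root_path_subset_V[OF d] a c by auto
  then have "Suc i < length xs" "Suc j < length xs"
    using root_path_length a(2) c(2) i(3) j(3) by fastforce+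
  moreover have "xs ! Suc i = xs ! Suc j"
    using \<open>parent a = parent c\<close> i j calculation unfolding parent_def by simp
  ultimately have "i = j"
    using root_path_distinct[OF d] unfolding xs_def by (simp add: nth_eq_iff_index_eq)
  then show ?thesis using i j by simp
qed

definition children :: "'a \<Rightarrow> 'a set" where
  "children a = {c \<in> V - {rt}. parent c = a}"

lemma neighbours_eq:
  assumes "a \<in> V" "a \<noteq> rt"
  shows "{c \<in> V. (a, c) \<in> E} = insert (parent a) (children a)"
proof
  show "{c \<in> V. (a, c) \<in> E} \<subseteq> insert (parent a) (children a)"
    using edge_parent_cases unfolding children_def by auto
  show "insert (parent a) (children a) \<subseteq> {c \<in> V. (a, c) \<in> E}"
    using parent_edge[OF assms] parent_edge edge_sym unfolding children_def by auto
qed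

lemma parent_notin_children:
  assumes "a \<in> V" "a \<noteq> rt"
  shows "parent a \<notin> children a"
proof
  assume "parent a \<in> children a"
  then have b: "parent a \<in> V" "parent a \<noteq> rt" "parent (parent a) = a" unfolding children_def by auto
  have "root_path (parent a) = parent a # root_path a"
    using root_path_Cons[OF b(1,2)] b(3) by simp
  then have "length (root_path a) = Suc (Suc (length (root_path a)))"
    using root_path_Cons[OF assms] by (metis length_Cons)
  then show False by simp
qed

lemma child_on_root_path:
  assumes d: "d \<in> V" and "a \<in> set (root_path d)" "a \<noteq> d"
  obtains c where "c \<in> children a" "c \<in> set (root_path d)"
proof -
  define xs where "xs = root_path d"
  obtain k where k: "k < length xs" "xs ! k = a"
    using assms(2) unfolding xs_def by (auto simp: in_set_conv_nth)
  have "k \<noteq> 0" using k assms(3) root_path_nth_0[OF d] unfolding xs_def by metis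
  define c where "c = xs ! (k - 1)"
  have rp_c: "root_path c = drop (k - 1) xs"
    using root_path_drop[OF d, of "k - 1"] k unfolding c_def xs_def by simp
  have c_on_path: "c \<in> set (root_path d)"
    using k unfolding c_def xs_def by simp
  have "1 < length (root_path c)" using rp_c k \<open>k \<noteq> 0\<close> by simp
  then have "c \<noteq> rt" using root_path_root by auto
  then have "c \<in> children a"
    using c_on_path root_path_subset_V[OF d] rp_c k \<open>k \<noteq> 0\<close>
    unfolding children_def parent_def by auto
  then show thesis using c_on_path by (rule that)
qed

lemma parent_of_child_on_root_path:
  assumes d: "d \<in> V" and c: "c \<in> children a" "c \<in> set (root_path d)"
  shows "a \<in> set (root_path d)" "a \<noteq> d"
proof -
  have c': "c \<in> V" "c \<noteq> rt" "parent c = a" using c(1) unfolding children_def by auto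
  have rp_c: "root_path c = c # root_path a"
    using root_path_Cons[OF c'(1,2)] c'(3) by simp
  then show a: "a \<in> set (root_path d)"
    using root_path_ancestor_subset[OF d c(2)] mem_root_path parent_edge(1)[OF c'(1,2)] c'(3) by auto
  show "a \<noteq> d"
  proof
    assume "a = d"
    moreover have "c \<noteq> a" using rp_c by (metis length_Cons n_not_Suc_n)
    ultimately show False using length_root_path_less[OF d c(2)] rp_c by simp
  qed
qed

lemma card_children_on_root_path:
  assumes d: "d \<in> V"
  shows "card {c \<in> children a. c \<in> set (root_path d)}
       = (if a \<in> set (root_path d) \<and> a \<noteq> d then 1 else 0)"
proof (cases "a \<in> set (root_path d) \<and> a \<noteq> d")
  case True
  then obtain c where c: "c \<in> children a" "c \<in> set (root_path d)"
    using child_on_root_path[OF d] by blast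
  have "c' = c" if "c' \<in> children a" "c' \<in> set (root_path d)" for c'
    using root_path_parent_inj[OF d that(2) _ c(2)] that(1) c(1) unfolding children_def by auto
  then have "{c \<in> children a. c \<in> set (root_path d)} = {c}"
    using c by blast
  then show ?thesis using True by simp
next
  case False
  then have "{c \<in> children a. c \<in> set (root_path d)} = {}"
    using parent_of_child_on_root_path[OF d] by blast
  then show ?thesis using False by (simp only: card.empty if_False)
qed

lemma desc_subset_nonroot: "a \<in> V \<Longrightarrow> a \<noteq> rt \<Longrightarrow> desc V E rt a \<subseteq> V - {rt}"
  using desc_eq root_path_root by auto

lemma desc_subset_desc_parent:
  assumes "a \<in> V" "a \<noteq> rt"
  shows "desc V E rt a \<subseteq> desc V E rt (parent a)"
proof -
  have "parent a \<in> set (root_path a)"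
    using root_path_Cons[OF assms] mem_root_path[OF parent_edge(1)[OF assms]] by simp
  show ?thesis
  proof
    fix c assume "c \<in> desc V E rt a"
    then have c: "c \<in> V" "a \<in> set (root_path c)" using desc_eq[OF assms(1)] by auto
    then have "parent a \<in> set (root_path c)"
      using root_path_ancestor_subset[OF c] \<open>parent a \<in> set (root_path a)\<close> by blast
    then show "c \<in> desc V E rt (parent a)" using desc_eq[OF parent_edge(1)[OF assms]] c by auto
  qed
qed

lemma desc_disjoint_siblings:
  assumes "a \<in> V" "a \<noteq> rt" "c \<in> V" "c \<noteq> rt" "parent a = parent c" "a \<noteq> c"
  shows "desc V E rt a \<inter> desc V E rt c = {}"
  using assms root_path_parent_inj desc_eq by fastforce

(* The edge (u, parent u) of a root path is represented by its lower end u. *)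
definition green :: "('a \<Rightarrow> 'a \<Rightarrow> real) \<Rightarrow> 'a \<Rightarrow> 'a \<Rightarrow> real" where
  "green \<rho> a d = (\<Sum>u\<in>set (root_path a) \<inter> set (root_path d) - {rt}. \<rho> u (parent u))"

lemma green_root: "green \<rho> rt d = 0"
proof -
  have no_common_edge: "set (root_path rt) \<inter> set (root_path d) - {rt} = {}"
    unfolding root_path_root by auto
  show ?thesis unfolding green_def no_common_edge by simp
qed

lemma green_sym: "green \<rho> a d = green \<rho> d a"
  unfolding green_def by (simp add: Int_commute)

lemma green_Cons:
  assumes "a \<in> V" "a \<noteq> rt"
  shows "green \<rho> a d = (if a \<in> set (root_path d) then \<rho> a (parent a) else 0) + green \<rho> (parent a) d"
proof -
  let ?common = "\<lambda>u. set (root_path u) \<inter> set (root_path d) - {rt}"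
  have "a \<notin> set (root_path (parent a))"
    using root_path_Cons[OF assms] root_path_distinct[OF assms(1)] by (metis distinct.simps(2))
  moreover have "?common a
      = (if a \<in> set (root_path d) then insert a (?common (parent a)) else ?common (parent a))"
    using root_path_Cons[OF assms] assms(2) by auto
  ultimately show ?thesis
    unfolding green_def by simp
qed

lemma lap_green:
  assumes \<rho>: "\<And>u v. (u, v) \<in> E \<Longrightarrow> \<rho> u v = \<rho> v u \<and> \<rho> u v \<noteq> 0"
    and a: "a \<in> V" "a \<noteq> rt" and d: "d \<in> V"
  shows "(\<Sum>c\<in>V - {rt}. lap V E (\<lambda>u v. 1 / \<rho> u v) a c * green \<rho> c d) = (if a = d then 1 else 0)"
proof -
  define on_path where "on_path c = (if c \<in> set (root_path d) then 1 else 0 :: real)" for c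
  have parent_term: "1 / \<rho> a (parent a) * (green \<rho> a d - green \<rho> (parent a) d) = on_path a"
    using green_Cons[OF a] \<rho>[OF parent_edge(2)[OF a]] unfolding on_path_def by simp
  have child_term: "1 / \<rho> a c * (green \<rho> a d - green \<rho> c d) = - on_path c" if "c \<in> children a" for c
  proof -
    have c: "c \<in> V" "c \<noteq> rt" "parent c = a" using that unfolding children_def by auto
    then have "\<rho> a c = \<rho> c a" "\<rho> c a \<noteq> 0" using \<rho>[OF parent_edge(2)[OF c(1,2)]] by auto
    then show ?thesis using green_Cons[OF c(1,2)] c(3) unfolding on_path_def by simp
  qed
  have "(\<Sum>c\<in>V - {rt}. lap V E (\<lambda>u v. 1 / \<rho> u v) a c * green \<rho> c d)
      = (\<Sum>c\<in>V. lap V E (\<lambda>u v. 1 / \<rho> u v) a c * green \<rho> c d)"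
    using finite_V root_in_V by (simp add: sum.remove green_root)
  also have "\<dots> = (\<Sum>c\<in>insert (parent a) (children a). 1 / \<rho> a c * (green \<rho> a d - green \<rho> c d))"
    using lap_mult_eq_neighbour_sum[OF finite_V a(1) edge_irrefl] neighbours_eq[OF a] by simp
  also have "\<dots> = on_path a - (\<Sum>c\<in>children a. on_path c)"
    using finite_V parent_notin_children[OF a] parent_term child_term
    by (simp add: children_def sum_negf)
  also have "(\<Sum>c\<in>children a. on_path c) = real (card {c \<in> children a. c \<in> set (root_path d)})"
    using finite_V unfolding on_path_def children_def by (simp add: sum.inter_filter[symmetric])
  also have "on_path a - \<dots> = (if a = d then 1 else 0)"
    using card_children_on_root_path[OF d] mem_root_path[OF d] unfolding on_path_def by auto
  finally show ?thesis .
qed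

lemma lap_inv_eq_green:
  assumes \<rho>: "\<And>u v. (u, v) \<in> E \<Longrightarrow> \<rho> u v = \<rho> v u \<and> \<rho> u v \<noteq> 0"
  shows "lap_inv V E rt (\<lambda>u v. 1 / \<rho> u v)
       = (\<lambda>a b. if a \<in> V - {rt} \<and> b \<in> V - {rt} then green \<rho> a b else 0)"
  unfolding lap_inv_def
proof (rule the_equality)
  let ?L = "lap V E (\<lambda>u v. 1 / \<rho> u v)" and ?S = "V - {rt}"
  have L_green: "(\<Sum>c\<in>?S. ?L a c * green \<rho> c b) = (if a = b then 1 else 0)"
    if "a \<in> ?S" "b \<in> ?S" for a b
    using lap_green[OF \<rho>] that by auto
  show "(\<forall>a\<in>?S. \<forall>b\<in>?S. (\<Sum>c\<in>?S. ?L a c * (if c \<in> ?S \<and> b \<in> ?S then green \<rho> c b else 0))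
          = (if a = b then 1 else 0))
      \<and> (\<forall>a b. a \<notin> ?S \<or> b \<notin> ?S \<longrightarrow> (if a \<in> ?S \<and> b \<in> ?S then green \<rho> a b else 0) = 0)"
    using L_green by (auto intro: sum.cong)
  fix G
  assume G: "(\<forall>a\<in>?S. \<forall>b\<in>?S. (\<Sum>c\<in>?S. ?L a c * G c b) = (if a = b then 1 else 0))
      \<and> (\<forall>a b. a \<notin> ?S \<or> b \<notin> ?S \<longrightarrow> G a b = 0)"
  have L_sym: "?L a c = ?L c a" for a c
    unfolding lap_def using \<rho> edge_sym by auto
  have "green \<rho> a b = G a b" if "a \<in> ?S" "b \<in> ?S" for a b
  proof (rule left_inverse_eq_right_inverse[where A = ?L])
    show "(\<Sum>c\<in>?S. green \<rho> a c * ?L c b) = (if a = b then 1 else 0)"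
      if "a \<in> ?S" "b \<in> ?S" for a b
      using L_green[OF that(2,1)]
      by (simp add: green_sym[of \<rho> a] L_sym[of _ b] mult.commute eq_commute)
  qed (use finite_V G that in auto)
  then show "G = (\<lambda>a b. if a \<in> ?S \<and> b \<in> ?S then green \<rho> a b else 0)"
    using G by (auto simp: fun_eq_iff)
qed

lemma green_diff_parent:
  assumes "is_parent V E rt b a" "d \<in> V"
  shows "green \<rho> a d - green \<rho> b d = (if d \<in> desc V E rt a then \<rho> a b else 0)"
  using green_Cons[of a \<rho> d] is_parentD[OF assms(1)] desc_eq assms(2) by auto

lemma green_diff_siblings:
  assumes "is_parent V E rt b a" "is_parent V E rt b c" "a \<noteq> c" "d \<in> V"
  shows "green \<rho> a d - green \<rho> c d
       = (if d \<in> desc V E rt a then \<rho> a b else if d \<in> desc V E rt c then - \<rho> c b else 0)"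
proof -
  have "desc V E rt a \<inter> desc V E rt c = {}"
    using desc_disjoint_siblings is_parentD assms(1-3) by metis
  then show ?thesis
    using green_diff_parent[OF assms(1,4), of \<rho>] green_diff_parent[OF assms(2,4), of \<rho>] by auto
qed

lemma green_diff_grandparent:
  assumes "is_parent V E rt g b" "is_parent V E rt b a" "d \<in> V"
  shows "green \<rho> a d - green \<rho> g d = (if d \<in> desc V E rt a then \<rho> a b + \<rho> b g
       else if d \<in> desc V E rt b - desc V E rt a then \<rho> b g else 0)"
proof -
  have "desc V E rt a \<subseteq> desc V E rt b"
    using desc_subset_desc_parent is_parentD[OF assms(2)] by metis
  then show ?thesis
    using green_diff_parent[OF assms(1,3), of \<rho>] green_diff_parent[OF assms(2,3), of \<rho>] by auto
qed

end

section \<open>Variances in the LC-PF model\<close>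

lemma sum_if_two_blocks:
  assumes "finite S" "A \<subseteq> S" "B \<subseteq> S" "A \<inter> B = {}" "\<And>d. F d 0 0 = 0"
    and "\<And>d. d \<in> S \<Longrightarrow> s d = (if d \<in> A then s1 else if d \<in> B then s2 else 0)"
    and "\<And>d. d \<in> S \<Longrightarrow> t d = (if d \<in> A then t1 else if d \<in> B then t2 else 0)"
  shows "(\<Sum>d\<in>S. F d (s d) (t d)) = (\<Sum>d\<in>A. F d s1 t1) + (\<Sum>d\<in>B. F d s2 t2)"
proof -
  have "(\<Sum>d\<in>S. F d (s d) (t d))
      = (\<Sum>d\<in>S. (if d \<in> A then F d s1 t1 else 0) + (if d \<in> B then F d s2 t2 else 0))"
    using assms(4-7) by (intro sum.cong refl) auto
  also have "\<dots> = (\<Sum>d\<in>A. F d s1 t1) + (\<Sum>d\<in>B. F d s2 t2)"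
    using assms(1-3) by (simp add: sum.distrib sum.inter_restrict[symmetric] Int_absorb1)
  finally show ?thesis .
qed

locale lc_pf = rooted_tree V E rt
  for V :: "'a set" and E :: "('a \<times> 'a) set" and rt :: 'a +
  fixes r x :: "'a \<Rightarrow> 'a \<Rightarrow> real" and M :: "'w measure" and p q :: "'a \<Rightarrow> 'w \<Rightarrow> real"
  assumes rx: "\<forall>a b. (a, b) \<in> E \<longrightarrow> r a b = r b a \<and> r a b > 0 \<and> x a b = x b a \<and> x a b > 0"
    and prob: "prob_space M"
    and rv: "\<forall>a\<in>V - {rt}. p a \<in> borel_measurable M \<and> q a \<in> borel_measurable M
               \<and> integrable M (\<lambda>\<omega>. (p a \<omega>)\<^sup>2) \<and> integrable M (\<lambda>\<omega>. (q a \<omega>)\<^sup>2)"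
    and uncorr: "\<forall>a\<in>V - {rt}. \<forall>b\<in>V - {rt}. a \<noteq> b \<longrightarrow>
               cov M (p a) (p b) = 0 \<and> cov M (q a) (q b) = 0 \<and> cov M (q a) (p b) = 0"
begin

sublocale prob_space M by (rule prob)

abbreviation \<Omega>p :: "'a \<Rightarrow> real" where "\<Omega>p d \<equiv> cov M (p d) (p d)"
abbreviation \<Omega>q :: "'a \<Rightarrow> real" where "\<Omega>q d \<equiv> cov M (q d) (q d)"
abbreviation \<Omega>pq :: "'a \<Rightarrow> real" where "\<Omega>pq d \<equiv> cov M (p d) (q d)"

lemma square_integrable_injections:
  "d \<in> V - {rt} \<Longrightarrow> square_integrable M (p d) \<and> square_integrable M (q d)"
  using rv unfolding square_integrable_def by blast

lemma lap_inv_resistance: "lap_inv V E rt (\<lambda>u v. 1 / r u v)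
       = (\<lambda>a b. if a \<in> V - {rt} \<and> b \<in> V - {rt} then green r a b else 0)"
  using rx by (intro lap_inv_eq_green) (metis less_irrefl)

lemma lap_inv_reactance: "lap_inv V E rt (\<lambda>u v. 1 / x u v)
       = (\<lambda>a b. if a \<in> V - {rt} \<and> b \<in> V - {rt} then green x a b else 0)"
  using rx by (intro lap_inv_eq_green) (metis less_irrefl)

lemma vmag_eq_green:
  "a \<in> V \<Longrightarrow> vmag V E rt r x v0 p q a
     = (\<lambda>\<omega>. (if a = rt then v0 else 0)
          + (\<Sum>d\<in>V - {rt}. green r a d * p d \<omega> + green x a d * q d \<omega>))"
  unfolding vmag_def lap_inv_resistance lap_inv_reactance
  by (auto simp: green_root sum.distrib)

lemma vphase_eq_green:
  "a \<in> V \<Longrightarrow> vphase V E rt r x th0 p q a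
     = (\<lambda>\<omega>. (if a = rt then th0 else 0)
          + (\<Sum>d\<in>V - {rt}. green x a d * p d \<omega> + - green r a d * q d \<omega>))"
  unfolding vphase_def lap_inv_resistance lap_inv_reactance
  by (auto simp: green_root sum_subtractf[symmetric])

lemma phi2_vmag_blocks:
  assumes "a \<in> V" "b \<in> V" "A \<subseteq> V - {rt}" "B \<subseteq> V - {rt}" "A \<inter> B = {}"
    and green_diff: "\<And>\<rho> d. d \<in> V \<Longrightarrow>
      green \<rho> a d - green \<rho> b d = (if d \<in> A then \<alpha> \<rho> else if d \<in> B then \<beta> \<rho> else 0)"
  shows "phi2 M (vmag V E rt r x v0 p q) (vmag V E rt r x v0 p q) a b
       = (\<Sum>d\<in>A. \<Omega>p d * (\<alpha> r)\<^sup>2 + \<Omega>q d * (\<alpha> x)\<^sup>2 + 2 * \<Omega>pq d * \<alpha> r * \<alpha> x)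
       + (\<Sum>d\<in>B. \<Omega>p d * (\<beta> r)\<^sup>2 + \<Omega>q d * (\<beta> x)\<^sup>2 + 2 * \<Omega>pq d * \<beta> r * \<beta> x)"
proof -
  let ?S = "V - {rt}" and ?F = "\<lambda>d s t. \<Omega>p d * s\<^sup>2 + \<Omega>q d * t\<^sup>2 + 2 * \<Omega>pq d * s * t"
  have "phi2 M (vmag V E rt r x v0 p q) (vmag V E rt r x v0 p q) a b
      = (\<Sum>d\<in>?S. (green r a d - green r b d) * (green r a d - green r b d) * \<Omega>p d
          + (green x a d - green x b d) * (green x a d - green x b d) * \<Omega>q d
          + ((green r a d - green r b d) * (green x a d - green x b d)
            + (green x a d - green x b d) * (green r a d - green r b d)) * \<Omega>pq d)"
    using finite_V square_integrable_injections uncorr assms(1,2)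
    by (intro phi2_affine_combinations[where \<alpha> = "green r" and \<beta> = "green x"
          and \<gamma> = "green r" and \<delta> = "green x"
          and cX = "\<lambda>u. if u = rt then v0 else 0" and cY = "\<lambda>u. if u = rt then v0 else 0"])
       (auto simp: vmag_eq_green)
  also have "\<dots> = (\<Sum>d\<in>?S. ?F d (green r a d - green r b d) (green x a d - green x b d))"
    by (simp add: power2_eq_square algebra_simps)
  also have "\<dots> = (\<Sum>d\<in>A. ?F d (\<alpha> r) (\<alpha> x)) + (\<Sum>d\<in>B. ?F d (\<beta> r) (\<beta> x))"
    using finite_V assms(3-5) green_diff by (intro sum_if_two_blocks) auto
  finally show ?thesis .
qed

lemma phi2_vphase_blocks:
  assumes "a \<in> V" "b \<in> V" "A \<subseteq> V - {rt}" "B \<subseteq> V - {rt}" "A \<inter> B = {}"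
    and green_diff: "\<And>\<rho> d. d \<in> V \<Longrightarrow>
      green \<rho> a d - green \<rho> b d = (if d \<in> A then \<alpha> \<rho> else if d \<in> B then \<beta> \<rho> else 0)"
  shows "phi2 M (vphase V E rt r x th0 p q) (vphase V E rt r x th0 p q) a b
       = (\<Sum>d\<in>A. \<Omega>p d * (\<alpha> x)\<^sup>2 + \<Omega>q d * (\<alpha> r)\<^sup>2 - 2 * \<Omega>pq d * \<alpha> r * \<alpha> x)
       + (\<Sum>d\<in>B. \<Omega>p d * (\<beta> x)\<^sup>2 + \<Omega>q d * (\<beta> r)\<^sup>2 - 2 * \<Omega>pq d * \<beta> r * \<beta> x)"
proof -
  let ?S = "V - {rt}" and ?F = "\<lambda>d s t. \<Omega>p d * t\<^sup>2 + \<Omega>q d * s\<^sup>2 - 2 * \<Omega>pq d * s * t"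
  have "phi2 M (vphase V E rt r x th0 p q) (vphase V E rt r x th0 p q) a b
      = (\<Sum>d\<in>?S. (green x a d - green x b d) * (green x a d - green x b d) * \<Omega>p d
          + (- green r a d - - green r b d) * (- green r a d - - green r b d) * \<Omega>q d
          + ((green x a d - green x b d) * (- green r a d - - green r b d)
            + (- green r a d - - green r b d) * (green x a d - green x b d)) * \<Omega>pq d)"
    using finite_V square_integrable_injections uncorr assms(1,2)
    by (intro phi2_affine_combinations[where \<alpha> = "green x" and \<beta> = "\<lambda>u d. - green r u d"
          and \<gamma> = "green x" and \<delta> = "\<lambda>u d. - green r u d"
          and cX = "\<lambda>u. if u = rt then th0 else 0" and cY = "\<lambda>u. if u = rt then th0 else 0"])
       (auto simp: vphase_eq_green)
  also have "\<dots> = (\<Sum>d\<in>?S. ?F d (green r a d - green r b d) (green x a d - green x b d))"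
    by (simp add: power2_eq_square algebra_simps)
  also have "\<dots> = (\<Sum>d\<in>A. ?F d (\<alpha> r) (\<alpha> x)) + (\<Sum>d\<in>B. ?F d (\<beta> r) (\<beta> x))"
    using finite_V assms(3-5) green_diff by (intro sum_if_two_blocks) auto
  finally show ?thesis .
qed

lemma phi2_vmag_vphase_blocks:
  assumes "a \<in> V" "b \<in> V" "A \<subseteq> V - {rt}" "B \<subseteq> V - {rt}" "A \<inter> B = {}"
    and green_diff: "\<And>\<rho> d. d \<in> V \<Longrightarrow>
      green \<rho> a d - green \<rho> b d = (if d \<in> A then \<alpha> \<rho> else if d \<in> B then \<beta> \<rho> else 0)"
  shows "phi2 M (vmag V E rt r x v0 p q) (vphase V E rt r x th0 p q) a b
       = (\<Sum>d\<in>A. (\<Omega>p d - \<Omega>q d) * \<alpha> r * \<alpha> x + \<Omega>pq d * ((\<alpha> x)\<^sup>2 - (\<alpha> r)\<^sup>2))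
       + (\<Sum>d\<in>B. (\<Omega>p d - \<Omega>q d) * \<beta> r * \<beta> x + \<Omega>pq d * ((\<beta> x)\<^sup>2 - (\<beta> r)\<^sup>2))"
proof -
  let ?S = "V - {rt}" and ?F = "\<lambda>d s t. (\<Omega>p d - \<Omega>q d) * s * t + \<Omega>pq d * (t\<^sup>2 - s\<^sup>2)"
  have "phi2 M (vmag V E rt r x v0 p q) (vphase V E rt r x th0 p q) a b
      = (\<Sum>d\<in>?S. (green r a d - green r b d) * (green x a d - green x b d) * \<Omega>p d
          + (green x a d - green x b d) * (- green r a d - - green r b d) * \<Omega>q d
          + ((green r a d - green r b d) * (- green r a d - - green r b d)
            + (green x a d - green x b d) * (green x a d - green x b d)) * \<Omega>pq d)"
    using finite_V square_integrable_injections uncorr assms(1,2)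
    by (intro phi2_affine_combinations[where \<alpha> = "green r" and \<beta> = "green x"
          and \<gamma> = "green x" and \<delta> = "\<lambda>u d. - green r u d"
          and cX = "\<lambda>u. if u = rt then v0 else 0" and cY = "\<lambda>u. if u = rt then th0 else 0"])
       (auto simp: vmag_eq_green vphase_eq_green)
  also have "\<dots> = (\<Sum>d\<in>?S. ?F d (green r a d - green r b d) (green x a d - green x b d))"
    by (simp add: power2_eq_square algebra_simps)
  also have "\<dots> = (\<Sum>d\<in>A. ?F d (\<alpha> r) (\<alpha> x)) + (\<Sum>d\<in>B. ?F d (\<beta> r) (\<beta> x))"
    using finite_V assms(3-5) green_diff by (intro sum_if_two_blocks) auto
  finally show ?thesis .
qed

lemma phi2_vmag_parent:
  assumes "is_parent V E rt b a"
  shows "phi2 M (vmag V E rt r x v0 p q) (vmag V E rt r x v0 p q) a b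
       = (\<Sum>d\<in>desc V E rt a. (r a b)\<^sup>2 * \<Omega>p d + (x a b)\<^sup>2 * \<Omega>q d + 2 * r a b * x a b * \<Omega>pq d)"
proof -
  note a = is_parentD[OF assms]
  have "green \<rho> a d - green \<rho> b d
      = (if d \<in> desc V E rt a then \<rho> a b else if d \<in> {} then 0 else 0)" if "d \<in> V" for \<rho> d
    using green_diff_parent[OF assms] that by simp
  from phi2_vmag_blocks[OF a(1,2) desc_subset_nonroot[OF a(1,3)] empty_subsetI Int_empty_right this]
  show ?thesis by (simp add: algebra_simps)
qed

lemma phi2_vmag_siblings:
  assumes "is_parent V E rt b a" "is_parent V E rt b c" "a \<noteq> c"
  shows "phi2 M (vmag V E rt r x v0 p q) (vmag V E rt r x v0 p q) a c
       = (\<Sum>d\<in>desc V E rt a. (r a b)\<^sup>2 * \<Omega>p d + (x a b)\<^sup>2 * \<Omega>q d + 2 * r a b * x a b * \<Omega>pq d)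
       + (\<Sum>d\<in>desc V E rt c. (r b c)\<^sup>2 * \<Omega>p d + (x b c)\<^sup>2 * \<Omega>q d + 2 * r b c * x b c * \<Omega>pq d)"
proof -
  note a = is_parentD[OF assms(1)] and c = is_parentD[OF assms(2)]
  have "r b c = r c b" "x b c = x c b"
    using rx assms(2) unfolding is_parent_def by auto
  moreover have "desc V E rt a \<inter> desc V E rt c = {}"
    using desc_disjoint_siblings a c assms(3) by metis
  ultimately show ?thesis
    using phi2_vmag_blocks[OF a(1) c(1) desc_subset_nonroot[OF a(1,3)]
        desc_subset_nonroot[OF c(1,3)] _ green_diff_siblings[OF assms]]
    by (simp add: algebra_simps)
qed

lemma phi2_vmag_grandparent:
  assumes "is_parent V E rt g b" "is_parent V E rt b a"
  shows "phi2 M (vmag V E rt r x v0 p q) (vmag V E rt r x v0 p q) a g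
       = (\<Sum>d\<in>desc V E rt a. \<Omega>p d * (r a b + r b g)\<^sup>2
            + 2 * \<Omega>pq d * (r a b + r b g) * (x a b + x b g) + \<Omega>q d * (x a b + x b g)\<^sup>2)
       + (\<Sum>d\<in>desc V E rt b - desc V E rt a. \<Omega>p d * (r b g)\<^sup>2 + \<Omega>q d * (x b g)\<^sup>2
            + 2 * \<Omega>pq d * r b g * x b g)"
proof -
  note a = is_parentD[OF assms(2)] and b = is_parentD[OF assms(1)]
  show ?thesis
    using phi2_vmag_blocks[OF a(1) b(2) desc_subset_nonroot[OF a(1,3)]
        Diff_subset[THEN order_trans, OF desc_subset_nonroot[OF b(1,3)]] Diff_disjoint
        green_diff_grandparent[OF assms]]
    by (simp add: algebra_simps)
qed

lemma phi2_vphase_grandparent: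
  assumes "is_parent V E rt g b" "is_parent V E rt b a"
  shows "phi2 M (vphase V E rt r x th0 p q) (vphase V E rt r x th0 p q) a g
       = (\<Sum>d\<in>desc V E rt a. \<Omega>p d * (x a b + x b g)\<^sup>2
            - 2 * \<Omega>pq d * (r a b + r b g) * (x a b + x b g) + \<Omega>q d * (r a b + r b g)\<^sup>2)
       + (\<Sum>d\<in>desc V E rt b - desc V E rt a. \<Omega>p d * (x b g)\<^sup>2 + \<Omega>q d * (r b g)\<^sup>2
            - 2 * \<Omega>pq d * r b g * x b g)"
proof -
  note a = is_parentD[OF assms(2)] and b = is_parentD[OF assms(1)]
  show ?thesis
    using phi2_vphase_blocks[OF a(1) b(2) desc_subset_nonroot[OF a(1,3)]
        Diff_subset[THEN order_trans, OF desc_subset_nonroot[OF b(1,3)]] Diff_disjoint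
        green_diff_grandparent[OF assms]]
    by (simp add: algebra_simps)
qed

lemma phi2_vmag_vphase_grandparent:
  assumes "is_parent V E rt g b" "is_parent V E rt b a"
  shows "phi2 M (vmag V E rt r x v0 p q) (vphase V E rt r x th0 p q) a g
       = (\<Sum>d\<in>desc V E rt a. (\<Omega>p d - \<Omega>q d) * (r a b + r b g) * (x a b + x b g)
            + \<Omega>pq d * (x a b + x b g)\<^sup>2 - \<Omega>pq d * (r a b + r b g)\<^sup>2)
       + (\<Sum>d\<in>desc V E rt b - desc V E rt a. (\<Omega>p d - \<Omega>q d) * r b g * x b g
            + \<Omega>pq d * ((x b g)\<^sup>2 - (r b g)\<^sup>2))"
proof -
  note a = is_parentD[OF assms(2)] and b = is_parentD[OF assms(1)]
  show ?thesis
    using phi2_vmag_vphase_blocks[OF a(1) b(2) desc_subset_nonroot[OF a(1,3)]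
        Diff_subset[THEN order_trans, OF desc_subset_nonroot[OF b(1,3)]] Diff_disjoint
        green_diff_grandparent[OF assms]]
    by (simp add: algebra_simps)
qed

lemma phi2_vmag_grandparent_diff:
  assumes "is_parent V E rt g b" "is_parent V E rt b a" "is_parent V E rt b c"
  shows "phi2 M (vmag V E rt r x v0 p q) (vmag V E rt r x v0 p q) a g
       - phi2 M (vmag V E rt r x v0 p q) (vmag V E rt r x v0 p q) c g
       = (\<Sum>d\<in>desc V E rt a. \<Omega>p d * ((r a b)\<^sup>2 + 2 * r a b * r b g)
            + \<Omega>q d * ((x a b)\<^sup>2 + 2 * x a b * x b g)
            + 2 * \<Omega>pq d * (r a b * x a b + r b g * x a b + r a b * x b g))
       - (\<Sum>d\<in>desc V E rt c. \<Omega>p d * ((r c b)\<^sup>2 + 2 * r c b * r b g)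
            + \<Omega>q d * ((x c b)\<^sup>2 + 2 * x c b * x b g)
            + 2 * \<Omega>pq d * (r c b * x c b + r b g * x c b + r c b * x b g))"
proof -
  define h where "h d = \<Omega>p d * (r b g)\<^sup>2 + \<Omega>q d * (x b g)\<^sup>2 + 2 * \<Omega>pq d * r b g * x b g" for d
  let ?F = "\<lambda>u d. \<Omega>p d * (r u b + r b g)\<^sup>2
    + 2 * \<Omega>pq d * (r u b + r b g) * (x u b + x b g) + \<Omega>q d * (x u b + x b g)\<^sup>2"
  have fin: "finite (desc V E rt b)" unfolding desc_def using finite_V by simp
  have sub: "desc V E rt u \<subseteq> desc V E rt b" if "is_parent V E rt b u" for u
    using desc_subset_desc_parent is_parentD[OF that] by metis
  have "phi2 M (vmag V E rt r x v0 p q) (vmag V E rt r x v0 p q) a g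
       - phi2 M (vmag V E rt r x v0 p q) (vmag V E rt r x v0 p q) c g
      = (\<Sum>d\<in>desc V E rt a. ?F a d - h d) - (\<Sum>d\<in>desc V E rt c. ?F c d - h d)"
    unfolding phi2_vmag_grandparent[OF assms(1,2)] phi2_vmag_grandparent[OF assms(1,3)]
      h_def[symmetric] sum_diff[OF fin sub[OF assms(2)]] sum_diff[OF fin sub[OF assms(3)]]
    by (simp add: sum_subtractf)
  also have "\<dots> = (\<Sum>d\<in>desc V E rt a. \<Omega>p d * ((r a b)\<^sup>2 + 2 * r a b * r b g)
            + \<Omega>q d * ((x a b)\<^sup>2 + 2 * x a b * x b g)
            + 2 * \<Omega>pq d * (r a b * x a b + r b g * x a b + r a b * x b g))
       - (\<Sum>d\<in>desc V E rt c. \<Omega>p d * ((r c b)\<^sup>2 + 2 * r c b * r b g)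
            + \<Omega>q d * ((x c b)\<^sup>2 + 2 * x c b * x b g)
            + 2 * \<Omega>pq d * (r c b * x c b + r b g * x c b + r c b * x b g))"
    by (intro arg_cong2[where f = "(-)"] sum.cong refl)
      (simp_all add: h_def power2_eq_square algebra_simps)
  finally show ?thesis .
qed

end

theorem theorem6:
  fixes V :: "'a set" and E :: "('a \<times> 'a) set" and rt :: 'a
    and r x :: "'a \<Rightarrow> 'a \<Rightarrow> real"
    and M :: "'w measure" and p q :: "'a \<Rightarrow> 'w \<Rightarrow> real" and v0 th0 :: real
  defines "v \<equiv> vmag V E rt r x v0 p q"
      and "\<theta> \<equiv> vphase V E rt r x th0 p q"
      and "Op \<equiv> (\<lambda>d. cov M (p d) (p d))"
      and "Oq \<equiv> (\<lambda>d. cov M (q d) (q d))"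
      and "Opq \<equiv> (\<lambda>d. cov M (p d) (q d))"
  assumes tree: "is_tree V E" and root: "rt \<in> V"
    and root_deg: "card {b. (rt, b) \<in> E} = 1"
    and rx: "\<forall>a b. (a, b) \<in> E \<longrightarrow> r a b = r b a \<and> r a b > 0 \<and> x a b = x b a \<and> x a b > 0"
    and prob: "prob_space M"
    and rv: "\<forall>a\<in>V - {rt}. p a \<in> borel_measurable M \<and> q a \<in> borel_measurable M
               \<and> integrable M (\<lambda>\<omega>. (p a \<omega>)\<^sup>2) \<and> integrable M (\<lambda>\<omega>. (q a \<omega>)\<^sup>2)"
    and uncorr: "\<forall>a\<in>V - {rt}. \<forall>b\<in>V - {rt}. a \<noteq> b \<longrightarrow>
               cov M (p a) (p b) = 0 \<and> cov M (q a) (q b) = 0 \<and> cov M (q a) (p b) = 0"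
    and qp_nonneg: "\<forall>a\<in>V - {rt}. cov M (q a) (p a) \<ge> 0"
  shows
   "(\<forall>a b c. is_parent V E rt b a \<and> is_parent V E rt b c \<and> a \<noteq> c \<longrightarrow>
       phi2 M v v a b =
         (\<Sum>d\<in>desc V E rt a. (r a b)\<^sup>2 * Op d + (x a b)\<^sup>2 * Oq d + 2 * r a b * x a b * Opq d)
     \<and> phi2 M v v a c =
         (\<Sum>d\<in>desc V E rt a. (r a b)\<^sup>2 * Op d + (x a b)\<^sup>2 * Oq d + 2 * r a b * x a b * Opq d)
       + (\<Sum>d\<in>desc V E rt c. (r b c)\<^sup>2 * Op d + (x b c)\<^sup>2 * Oq d + 2 * r b c * x b c * Opq d))
  \<and> (\<forall>g b a c. is_parent V E rt g b \<and> is_parent V E rt b a \<and> is_parent V E rt b c \<longrightarrow>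
       phi2 M v v a g - phi2 M v v c g =
         (\<Sum>d\<in>desc V E rt a. Op d * ((r a b)\<^sup>2 + 2 * r a b * r b g)
              + Oq d * ((x a b)\<^sup>2 + 2 * x a b * x b g)
              + 2 * Opq d * (r a b * x a b + r b g * x a b + r a b * x b g))
       - (\<Sum>d\<in>desc V E rt c. Op d * ((r c b)\<^sup>2 + 2 * r c b * r b g)
              + Oq d * ((x c b)\<^sup>2 + 2 * x c b * x b g)
              + 2 * Opq d * (r c b * x c b + r b g * x c b + r c b * x b g))
     \<and> phi2 M v v a g =
         (\<Sum>d\<in>desc V E rt a. Op d * (r a b + r b g)\<^sup>2
              + 2 * Opq d * (r a b + r b g) * (x a b + x b g) + Oq d * (x a b + x b g)\<^sup>2)
       + (\<Sum>d\<in>desc V E rt b - desc V E rt a. Op d * (r b g)\<^sup>2 + Oq d * (x b g)\<^sup>2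
              + 2 * Opq d * r b g * x b g)
     \<and> phi2 M \<theta> \<theta> a g =
         (\<Sum>d\<in>desc V E rt a. Op d * (x a b + x b g)\<^sup>2
              - 2 * Opq d * (r a b + r b g) * (x a b + x b g) + Oq d * (r a b + r b g)\<^sup>2)
       + (\<Sum>d\<in>desc V E rt b - desc V E rt a. Op d * (x b g)\<^sup>2 + Oq d * (r b g)\<^sup>2
              - 2 * Opq d * r b g * x b g)
     \<and> phi2 M v \<theta> a g =
         (\<Sum>d\<in>desc V E rt a. (Op d - Oq d) * (r a b + r b g) * (x a b + x b g)
              + Opq d * (x a b + x b g)\<^sup>2 - Opq d * (r a b + r b g)\<^sup>2)
       + (\<Sum>d\<in>desc V E rt b - desc V E rt a. (Op d - Oq d) * r b g * x b g
              + Opq d * ((x b g)\<^sup>2 - (r b g)\<^sup>2)))"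
proof -
  interpret lc_pf V E rt r x M p q
    using tree root rx prob rv uncorr unfolding lc_pf_def rooted_tree_def lc_pf_axioms_def by blast
  show ?thesis
    unfolding v_def \<theta>_def Op_def Oq_def Opq_def
    by (intro conjI allI impI; elim conjE;
        intro phi2_vmag_parent phi2_vmag_siblings phi2_vmag_grandparent_diff
          phi2_vmag_grandparent phi2_vphase_grandparent phi2_vmag_vphase_grandparent;
        assumption)
qed

end
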